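(* Let $h$ be the Hahn sequence space and let $\Delta:h\to h$ be the forward difference operator $(\Delta x)_k=x_k-x_{k+1}$. Then $C_1\sigma(\Delta,h)=\emptyset$, and every $\alpha\in\sigma_r(\Delta,h)$ belongs to $C_2\sigma(\Delta,h)$.
   Context: Sequences are indexed by $\mathbb{N}=\{0,1,2,\dots\}$. The Hahn sequence space is $h=\{x=(x_k):\sum_{k=1}^\infty k|x_k-x_{k+1}|<\infty \text{ and } \lim_{k\to\infty}x_k=0\}$, a Banach space with norm $\|x\|_h=\sum_k k|x_k-x_{k+1}|+\sup_k|x_k|$. $\Delta$ is given by the matrix with $1$ on the main diagonal and $-1$ on the first superdiagonal. The residual spectrum $\sigma_r(T,X)$ of a bounded operator $T$ on a Banach space $X$ is the set of $\alpha$ such that $\alpha I-T$ is injective but has non-dense range. Goldberg's classification: for a bounded operator $S$ on $X$, state (C) means $\overline{R(S)}\ne X$; state (1) means $S^{-1}$ exists and is continuous, (2) means $S^{-1}$ exists but is discontinuous. $C_j\sigma(T,X)$ is the set of $\alpha\in\mathbb{C}$ such that $\alpha I-T$ is in state $C_j$. *)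

theory Defs
  imports Complex_Main
begin

definition hahn :: "(nat \<Rightarrow> complex) set" where
  "hahn = {x. summable (\<lambda>k. real k * norm (x k - x (Suc k))) \<and> x \<longlonglongrightarrow> 0}"

definition hahn_norm :: "(nat \<Rightarrow> complex) \<Rightarrow> real" where
  "hahn_norm x = (\<Sum>k. real k * norm (x k - x (Suc k))) + (SUP k. norm (x k))"

definition Delta :: "(nat \<Rightarrow> complex) \<Rightarrow> (nat \<Rightarrow> complex)" where
  "Delta x = (\<lambda>k. x k - x (Suc k))"

definition shifted :: "complex \<Rightarrow> (nat \<Rightarrow> complex) \<Rightarrow> (nat \<Rightarrow> complex)" where
  "shifted \<alpha> x = (\<lambda>k. \<alpha> * x k - Delta x k)"

definition dense_range_h :: "((nat \<Rightarrow> complex) \<Rightarrow> (nat \<Rightarrow> complex)) \<Rightarrow> bool" where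
  "dense_range_h S \<longleftrightarrow>
     (\<forall>x\<in>hahn. \<forall>\<epsilon>>0. \<exists>y\<in>S ` hahn. hahn_norm (x - y) < \<epsilon>)"

definition inverse_continuous_h :: "((nat \<Rightarrow> complex) \<Rightarrow> (nat \<Rightarrow> complex)) \<Rightarrow> bool" where
  "inverse_continuous_h S \<longleftrightarrow>
     (\<forall>y0\<in>S ` hahn. \<forall>\<epsilon>>0. \<exists>\<delta>>0. \<forall>y\<in>S ` hahn.
        hahn_norm (y - y0) < \<delta> \<longrightarrow>
        hahn_norm (the_inv_into hahn S y - the_inv_into hahn S y0) < \<epsilon>)"

definition residual_spectrum_Delta_h :: "complex set" where
  "residual_spectrum_Delta_h =
     {\<alpha>. inj_on (shifted \<alpha>) hahn \<and> \<not> dense_range_h (shifted \<alpha>)}"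

definition C1_spectrum_Delta_h :: "complex set" where
  "C1_spectrum_Delta_h =
     {\<alpha>. \<not> dense_range_h (shifted \<alpha>) \<and> inj_on (shifted \<alpha>) hahn
          \<and> inverse_continuous_h (shifted \<alpha>)}"

definition C2_spectrum_Delta_h :: "complex set" where
  "C2_spectrum_Delta_h =
     {\<alpha>. \<not> dense_range_h (shifted \<alpha>) \<and> inj_on (shifted \<alpha>) hahn
          \<and> \<not> inverse_continuous_h (shifted \<alpha>)}"

end

theory Submission
  imports Defs
begin

text \<open>Since \<open>(\<alpha>I - \<Delta>) z = ((\<alpha> - 1) z\<^sub>k + z\<^sub>k\<^sub>+\<^sub>1)\<^sub>k\<close>, for \<open>\<alpha> \<noteq> 1\<close> every finitely supported
  sequence lies in the range (solve for \<open>z\<close> backwards from the last nonzero entry), and the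
  truncations of any \<open>x \<in> h\<close> converge to \<open>x\<close> in the Hahn norm, so the range is dense.
  For \<open>\<alpha> = 1\<close> the operator kills the first unit vector. Hence \<open>\<sigma>\<^sub>r(\<Delta>, h)\<close> is empty; as
  \<open>C\<^sub>1\<sigma>(\<Delta>, h) \<subseteq> \<sigma>\<^sub>r(\<Delta>, h)\<close>, both claims follow.\<close>

lemma shifted_apply: "shifted a z k = (a - 1) * z k + z (Suc k)"
  by (simp add: shifted_def Delta_def algebra_simps)

lemma shifted_add: "shifted a (\<lambda>k. u k + v k) = (\<lambda>k. shifted a u k + shifted a v k)"
  by (simp add: fun_eq_iff shifted_apply algebra_simps)

lemma eventually_zero_in_hahn:
  assumes "\<forall>k>N. z k = 0"
  shows "z \<in> hahn"
proof -
  have "summable (\<lambda>k. real k * norm (z k - z (Suc k)))"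
    by (rule summable_finite[of "{..N}"]) (use assms in auto)
  moreover have "z \<longlonglongrightarrow> 0"
    by (rule tendsto_eventually) (use assms in \<open>auto simp: eventually_sequentially intro: exI[of _ "Suc N"]\<close>)
  ultimately show ?thesis by (simp add: hahn_def)
qed

lemma eventually_zero_in_range_shifted:
  assumes "a \<noteq> 1" and "\<forall>k>N. y k = 0"
  shows "\<exists>z. (\<forall>k>N. z k = 0) \<and> shifted a z = y"
  using assms(2)
proof (induction N arbitrary: y)
  case 0
  define z where "z = (\<lambda>k::nat. if k = 0 then y 0 / (a - 1) else 0)"
  have "shifted a z k = y k" for k
    using assms(1) 0 by (cases k) (simp_all add: shifted_apply z_def)
  then show ?case
    by (intro exI[of _ z]) (simp add: z_def fun_eq_iff)
next
  case (Suc N)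
  define e where "e = (\<lambda>k. if k = Suc N then y (Suc N) / (a - 1) else 0)"
  have "\<forall>k>N. (y - shifted a e) k = 0"
  proof (intro allI impI)
    fix k
    assume "k > N"
    then consider "k = Suc N" | "k > Suc N"
      by linarith
    then show "(y - shifted a e) k = 0"
      using assms(1) Suc.prems by cases (simp_all add: e_def shifted_apply)
  qed
  from Suc.IH[OF this] obtain z where z: "\<forall>k>N. z k = 0" "shifted a z = y - shifted a e"
    by blast
  have "shifted a (\<lambda>k. z k + e k) = y"
    using z(2) by (simp add: shifted_add fun_eq_iff)
  moreover have "\<forall>k>Suc N. z k + e k = 0"
    using z(1) by (simp add: e_def)
  ultimately show ?case by (intro exI[of _ "\<lambda>k. z k + e k"]) simp
qed

text \<open>Telescoping from \<open>x\<^sub>n\<close> to the limit \<open>0\<close> and using \<open>n \<le> k\<close> for \<open>k \<ge> n\<close>.\<close>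

lemma hahn_weighted_term_le_tail:
  assumes "x \<in> hahn"
  shows "real n * norm (x n) \<le> (\<Sum>i. real (i + n) * norm (x (i + n) - x (Suc (i + n))))"
proof (cases "n = 0")
  case False
  define d where "d = (\<lambda>i. norm (x (i + n) - x (Suc (i + n))))"
  from assms have "summable (\<lambda>k. real k * norm (x k - x (Suc k)))" and x0: "x \<longlonglongrightarrow> 0"
    by (auto simp: hahn_def)
  then have weighted: "summable (\<lambda>i. real (i + n) * d i)"
    unfolding d_def using summable_ignore_initial_segment by fastforce
  have d: "summable d"
  proof (rule summable_comparison_test[OF _ weighted])
    have "d i \<le> real (i + n) * d i" for i
      using False mult_right_mono[of 1 "real (i + n)" "d i"] by (simp add: d_def)
    then show "\<exists>N. \<forall>i\<ge>N. norm (d i) \<le> real (i + n) * d i"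
      by (simp add: d_def)
  qed
  have "(\<lambda>i. x (i + n) - x (Suc i + n)) sums (x (0 + n) - 0)"
    by (rule telescope_sums') (rule LIMSEQ_ignore_initial_segment[OF x0])
  then have "norm (x n) = norm (\<Sum>i. x (i + n) - x (Suc (i + n)))"
    by (simp add: sums_iff)
  also have "\<dots> \<le> suminf d"
    using d unfolding d_def by (rule summable_norm)
  finally have "real n * norm (x n) \<le> real n * suminf d"
    by (simp add: mult_left_mono)
  also have "\<dots> = (\<Sum>i. real n * d i)"
    using suminf_mult[OF d] by simp
  also have "\<dots> \<le> (\<Sum>i. real (i + n) * d i)"
    by (rule suminf_le[OF _ summable_mult[OF d] weighted]) (simp add: d_def mult_right_mono)
  finally show ?thesis by (simp add: d_def)
qed (use assms in \<open>auto simp: hahn_def intro: suminf_nonneg\<close>)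

text \<open>The variation part of the error is \<open>N |x\<^sub>N\<^sub>+\<^sub>1|\<close> plus a tail of the defining series, and
  the previous lemma bounds \<open>N |x\<^sub>N\<^sub>+\<^sub>1|\<close> by that same tail.\<close>

lemma hahn_truncation_approx:
  assumes x: "x \<in> hahn" and e: "\<epsilon> > 0"
  obtains N where "hahn_norm (x - (\<lambda>k. if k \<le> N then x k else 0)) < \<epsilon>"
proof -
  define f where "f = (\<lambda>k. real k * norm (x k - x (Suc k)))"
  from x have sf: "summable f" and x0: "x \<longlonglongrightarrow> 0" by (auto simp: hahn_def f_def)
  obtain N1 where N1: "\<forall>n\<ge>N1. norm (\<Sum>i. f (i + n)) < \<epsilon>/4"
    using suminf_exist_split[OF _ sf, of "\<epsilon>/4"] e by auto
  obtain N0 where N0: "\<forall>n\<ge>N0. norm (x n) < \<epsilon>/4"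
    using x0 e unfolding LIMSEQ_iff by (metis diff_zero divide_pos_pos zero_less_numeral)
  define N where "N = N0 + N1"
  define d where "d = x - (\<lambda>k. if k \<le> N then x k else 0)"
  have dk: "d k = (if k \<le> N then 0 else x k)" for k
    by (simp add: d_def)
  define g where "g = (\<lambda>k. real k * norm (d k - d (Suc k)))"
  have tail: "g (i + Suc N) = f (i + Suc N)" for i
    by (simp add: g_def f_def dk)
  have sg: "summable g"
    using summable_iff_shift[of g "Suc N"] summable_iff_shift[of f "Suc N"] sf tail by simp
  have head: "sum g {..<Suc N} = real N * norm (x (Suc N))"
  proof -
    have "sum g {..<N} = 0" by (rule sum.neutral) (auto simp: g_def dk)
    then show ?thesis by (simp add: g_def dk)
  qed
  have tail_small: "(\<Sum>i. f (i + Suc N)) < \<epsilon>/4"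
    using N1[rule_format, of "Suc N"] by (simp add: N_def)
  have "real N * norm (x (Suc N)) \<le> real (Suc N) * norm (x (Suc N))"
    by (simp add: mult_right_mono)
  also have "\<dots> \<le> (\<Sum>i. f (i + Suc N))"
    using hahn_weighted_term_le_tail[OF x, of "Suc N"] by (simp add: f_def)
  finally have head_small: "sum g {..<Suc N} < \<epsilon>/4"
    using head tail_small by linarith
  have "suminf g = (\<Sum>i. f (i + Suc N)) + sum g {..<Suc N}"
    by (simp only: suminf_split_initial_segment[OF sg, of "Suc N"] tail)
  with tail_small head_small have var: "suminf g < \<epsilon>/2" by linarith
  have sup: "(SUP k. norm (d k)) \<le> \<epsilon>/4"
  proof (rule cSUP_least)
    show "norm (d k) \<le> \<epsilon>/4" for k
      using N0 e by (cases "k \<le> N") (auto simp: dk N_def less_imp_le)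
  qed simp
  have "hahn_norm d < \<epsilon>"
    using var sup e unfolding hahn_norm_def g_def by linarith
  then show ?thesis using that d_def by blast
qed

lemma dense_range_shifted:
  assumes "a \<noteq> 1"
  shows "dense_range_h (shifted a)"
  unfolding dense_range_h_def
proof (intro ballI allI impI)
  fix x :: "nat \<Rightarrow> complex" and \<epsilon> :: real
  assume "x \<in> hahn" and "\<epsilon> > 0"
  then obtain N where N: "hahn_norm (x - (\<lambda>k. if k \<le> N then x k else 0)) < \<epsilon>"
    by (rule hahn_truncation_approx)
  define y where "y = (\<lambda>k. if k \<le> N then x k else 0)"
  have "\<forall>k>N. y k = 0"
    by (simp add: y_def)
  from eventually_zero_in_range_shifted[OF assms this]
  obtain z where z: "\<forall>k>N. z k = 0" "shifted a z = y"
    by blast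
  have "y \<in> shifted a ` hahn"
    unfolding z(2)[symmetric] by (rule imageI[OF eventually_zero_in_hahn[OF z(1)]])
  with N show "\<exists>y\<in>shifted a ` hahn. hahn_norm (x - y) < \<epsilon>"
    unfolding y_def by (rule bexI)
qed

lemma not_inj_on_shifted_1: "\<not> inj_on (shifted 1) hahn"
proof
  assume inj: "inj_on (shifted 1) hahn"
  define e0 :: "nat \<Rightarrow> complex" where "e0 = (\<lambda>k. if k = 0 then 1 else 0)"
  have "e0 \<in> hahn" "(\<lambda>k. 0) \<in> hahn"
    by (auto intro: eventually_zero_in_hahn[of 0] simp: e0_def)
  moreover have "shifted 1 e0 = shifted 1 (\<lambda>k. 0)"
    by (simp add: shifted_apply e0_def fun_eq_iff)
  ultimately have "e0 = (\<lambda>k. 0)" using inj by (meson inj_onD)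
  then show False by (metis e0_def one_neq_zero)
qed

lemma residual_spectrum_Delta_h_empty: "residual_spectrum_Delta_h = {}"
proof -
  have "\<not> (inj_on (shifted \<alpha>) hahn \<and> \<not> dense_range_h (shifted \<alpha>))" for \<alpha>
    using not_inj_on_shifted_1 dense_range_shifted by (cases "\<alpha> = 1") simp_all
  then show ?thesis
    unfolding residual_spectrum_Delta_h_def by simp
qed

theorem theorem4p8:
  shows "C1_spectrum_Delta_h = {} \<and> residual_spectrum_Delta_h \<subseteq> C2_spectrum_Delta_h"
  using residual_spectrum_Delta_h_empty
  unfolding C1_spectrum_Delta_h_def residual_spectrum_Delta_h_def by blast

end
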